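(* Let $r\ge 3$ and $n \ge \frac{(r-1)(2r+1)}{2}$ be integers. If $\mathcal{H}$ is an $n$-vertex $r$-graph that is $\mathrm{T}_r$-free and satisfies $\delta_{r-1}^{+}(\mathcal{H}) > \frac{2n}{2r+1}$, then $\mathcal{H}$ is $r$-partite.
   Context: An $r$-graph $\mathcal{H}$ is a collection of $r$-subsets (edges) of a finite vertex set $V(\mathcal{H})$. The shadow is $\partial\mathcal{H}=\{e\in\binom{V(\mathcal{H})}{r-1}\colon e\subseteq E \text{ for some } E\in\mathcal{H}\}$. For $e\in\partial\mathcal{H}$, $N_{\mathcal{H}}(e)=\{v\in V(\mathcal{H})\colon e\cup\{v\}\in\mathcal{H}\}$. The minimum positive codegree is $\delta_{r-1}^{+}(\mathcal{H})=\min\{|N_{\mathcal{H}}(e)|\colon e\in\partial\mathcal{H}\}$. The $r$-uniform generalized triangle is $\mathrm{T}_r=\{\{1,\ldots,r-1,r\},\{1,\ldots,r-1,r+1\},\{r,r+1,\ldots,2r-1\}\}$; $\mathcal{H}$ is $\mathrm{T}_r$-free if it contains no subhypergraph isomorphic to $\mathrm{T}_r$. $\mathcal{H}$ is $r$-partite if $V(\mathcal{H})$ can be partitioned into $r$ parts $V_1,\dots,V_r$ such that every edge contains exactly one vertex from each part. *)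

theory Defs
  imports Complex_Main
begin

definition r_graph :: "nat \<Rightarrow> 'a set \<Rightarrow> 'a set set \<Rightarrow> bool" where
  "r_graph r V H \<longleftrightarrow> finite V \<and> (\<forall>E\<in>H. E \<subseteq> V \<and> card E = r)"

definition shadow :: "nat \<Rightarrow> 'a set set \<Rightarrow> 'a set set" where
  "shadow r H = {e. card e = r - 1 \<and> (\<exists>E\<in>H. e \<subseteq> E)}"

definition nbhd :: "'a set \<Rightarrow> 'a set set \<Rightarrow> 'a set \<Rightarrow> 'a set" where
  "nbhd V H e = {v \<in> V. insert v e \<in> H}"

definition min_pos_codeg :: "nat \<Rightarrow> 'a set \<Rightarrow> 'a set set \<Rightarrow> nat" where
  "min_pos_codeg r V H = Min ((\<lambda>e. card (nbhd V H e)) ` shadow r H)"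

definition gen_triangle :: "nat \<Rightarrow> nat set set" where
  "gen_triangle r = {{1..r}, insert (r+1) {1..r-1}, {r..2*r-1}}"

definition T_free :: "nat \<Rightarrow> 'a set set \<Rightarrow> bool" where
  "T_free r H \<longleftrightarrow> \<not> (\<exists>\<phi> :: nat \<Rightarrow> 'a. inj_on \<phi> {1..2*r-1} \<and>
                          (\<forall>F\<in>gen_triangle r. \<phi> ` F \<in> H))"

definition r_partite :: "nat \<Rightarrow> 'a set \<Rightarrow> 'a set set \<Rightarrow> bool" where
  "r_partite r V H \<longleftrightarrow> (\<exists>P :: 'a \<Rightarrow> nat. (\<forall>v\<in>V. P v < r) \<and>
       (\<forall>E\<in>H. \<forall>i<r. card {v\<in>E. P v = i} = 1))"

end

theory Submission imports Defs begin

text \<open>Let \<open>d\<close> be the minimum positive codegree, so \<open>d \<ge> r\<close> and \<open>2n < (2r+1)d\<close>.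
  \<open>T\<^sub>r\<close>-freeness forces two distinct vertices of a neighbourhood \<open>N(e)\<close> never to lie in a
  common edge; hence the links \<open>N(F - x)\<close>, \<open>x \<in> F\<close>, of an edge \<open>F\<close> are pairwise disjoint and
  cover at least \<open>rd\<close> vertices. Counting with \<open>2n < (2r+1)d\<close> then shows that if \<open>N(e\<^sub>1)\<close> and
  \<open>N(e\<^sub>2)\<close> meet, no edge joins a vertex of \<open>N(e\<^sub>1)\<close> to another vertex of \<open>N(e\<^sub>2)\<close>.
  Fix an edge \<open>E\<close>. Every \<open>N(e)\<close> meets the link of exactly one \<open>x \<in> E\<close>, the anchor of \<open>e\<close>;
  for every edge \<open>G\<close>, \<open>g \<mapsto> anchor(G - g)\<close> is a bijection onto \<open>E\<close>, and \<open>anchor(F - v)\<close>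
  does not depend on the edge \<open>F \<ni> v\<close>. Colouring \<open>v\<close> by this anchor gives the \<open>r\<close>-partition.\<close>

lemma mem_nbhd_iff: "v \<in> nbhd V H e \<longleftrightarrow> v \<in> V \<and> insert v e \<in> H"
  by (simp add: nbhd_def)

lemma nbhd_subset: "nbhd V H e \<subseteq> V"
  by (auto simp: nbhd_def)

lemma card_le_twice_if_no_triple_point:
  assumes "finite V" "A \<subseteq> V" "B \<subseteq> V" "C \<subseteq> V" "A \<inter> B \<inter> C = {}"
  shows "card A + card B + card C \<le> 2 * card V"
proof -
  have fin: "finite A" "finite B" "finite C"
    using assms finite_subset by metis+
  have "card A + card B = card (A \<union> B) + card (A \<inter> B)"
    using fin card_Un_Int by blast
  moreover have "card (A \<inter> B) + card C = card (A \<inter> B \<union> C)"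
    using fin assms(5) by (subst card_Un_disjoint) auto
  moreover have "card (A \<union> B) \<le> card V" "card (A \<inter> B \<union> C) \<le> card V"
    using assms by (auto intro!: card_mono)
  ultimately show ?thesis by linarith
qed

lemma card_fibre_bij_betw:
  assumes "bij_betw f A B" "b \<in> B"
  shows "card {a \<in> A. f a = b} = 1"
proof -
  obtain a where a: "a \<in> A" "f a = b"
    using assms unfolding bij_betw_def by blast
  then have "{a' \<in> A. f a' = b} = {a}"
    using assms(1) unfolding bij_betw_def inj_on_def by blast
  then show ?thesis by simp
qed

lemma not_T_free_if_triangle:
  assumes "2 \<le> r" "finite e" "card e = r - 1" "finite F" "card F = r" "e \<inter> F = {}"
    and "u \<in> F" "v \<in> F" "u \<noteq> v" "insert u e \<in> H" "insert v e \<in> H" "F \<in> H"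
  shows "\<not> T_free r H"
proof -
  obtain \<alpha> where \<alpha>: "bij_betw \<alpha> {1..r-1} e"
    using finite_same_card_bij[of "{1..r-1}" e] assms(2,3) by auto
  have "card (F - {u, v}) = r - 2"
    using assms(4,5,7-9) by (simp add: card_Diff_subset)
  then obtain \<beta> where \<beta>: "bij_betw \<beta> {r+2..2*r-1} (F - {u, v})"
    using finite_same_card_bij[of "{r+2..2*r-1}" "F - {u, v}"] assms(4) by auto
  define \<phi> where "\<phi> i = (if i \<le> r - 1 then \<alpha> i else if i = r then u else if i = r + 1 then v else \<beta> i)"
    for i
  have "\<phi> ` {1..r-1} = \<alpha> ` {1..r-1}" "\<phi> ` {r+2..2*r-1} = \<beta> ` {r+2..2*r-1}"
    by (auto simp: \<phi>_def intro!: image_cong)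
  then have low: "\<phi> ` {1..r-1} = e" and high: "\<phi> ` {r+2..2*r-1} = F - {u, v}"
    using \<alpha> \<beta> unfolding bij_betw_def by simp_all
  have mid: "\<phi> r = u" "\<phi> (r + 1) = v"
    using assms(1) by (auto simp: \<phi>_def)
  have "{1..r} = insert r {1..r-1}" "{r..2*r-1} = {r, r+1} \<union> {r+2..2*r-1}"
    using assms(1) by auto
  then have images: "\<phi> ` {1..r} = insert u e" "\<phi> ` insert (r+1) {1..r-1} = insert v e"
      "\<phi> ` {r..2*r-1} = F"
    using low high mid assms(7,8) by (simp_all add: image_Un insert_absorb) blast
  have "{1..2*r-1} = {1..r-1} \<union> {r..2*r-1}"
    using assms(1) by auto
  then have "\<phi> ` {1..2*r-1} = e \<union> F"
    using low images(3) by (simp add: image_Un)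
  moreover have "card (e \<union> F) = card {1..2*r-1}"
    using assms(1-6) by (simp add: card_Un_disjoint)
  ultimately have "inj_on \<phi> {1..2*r-1}"
    by (simp add: inj_on_iff_eq_card)
  then show ?thesis
    using images assms(10-12) unfolding T_free_def gen_triangle_def by (intro notI) auto
qed

locale T_free_high_codegree =
  fixes r :: nat and V :: "'a set" and H :: "'a set set" and d :: nat
  assumes two_le_r: "2 \<le> r"
    and r_graph: "r_graph r V H"
    and T_free: "T_free r H"
    and codegree_ge: "\<And>e. e \<in> shadow r H \<Longrightarrow> d \<le> card (nbhd V H e)"
    and r_le_d: "r \<le> d"
    and card_V_lt: "2 * card V < (2 * r + 1) * d"
begin

abbreviation "N \<equiv> nbhd V H"

lemma finite_V: "finite V"
  using r_graph by (simp add: r_graph_def)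

lemma edge_subset: "F \<in> H \<Longrightarrow> F \<subseteq> V"
  and card_edge: "F \<in> H \<Longrightarrow> card F = r"
  using r_graph by (auto simp: r_graph_def)

lemma finite_edge: "F \<in> H \<Longrightarrow> finite F"
  using card_edge two_le_r by (metis card.infinite not_numeral_le_zero)

lemma finite_nbhd: "finite (N e)"
  using finite_subset[OF nbhd_subset finite_V] .

lemma card_shadow: "e \<in> shadow r H \<Longrightarrow> card e = r - 1"
  and finite_shadow: "e \<in> shadow r H \<Longrightarrow> finite e"
  using two_le_r by (auto simp: shadow_def intro: card_ge_0_finite)

lemma edge_remove_in_shadow: "F \<in> H \<Longrightarrow> x \<in> F \<Longrightarrow> F - {x} \<in> shadow r H"
  using card_edge finite_edge by (auto simp: shadow_def)

lemma in_nbhd_edge_remove: "F \<in> H \<Longrightarrow> x \<in> F \<Longrightarrow> x \<in> N (F - {x})"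
  using edge_subset by (auto simp: mem_nbhd_iff insert_absorb)

lemma nbhd_disjoint_shadow:
  assumes "e \<in> shadow r H" "v \<in> N e"
  shows "v \<notin> e"
proof
  assume "v \<in> e"
  then have "e \<in> H"
    using assms(2) by (simp add: mem_nbhd_iff insert_absorb)
  then show False
    using card_edge card_shadow[OF assms(1)] two_le_r by fastforce
qed

text \<open>Moving an edge away from \<open>e\<close> one vertex at a time (possible since codegrees exceed
  \<open>|e|\<close>) reduces the claim to the case \<open>F \<inter> e = {}\<close>, where \<open>e\<close>, \<open>u\<close>, \<open>v\<close> and \<open>F\<close>
  would form a copy of \<open>T\<^sub>r\<close>.\<close>
lemma nbhd_no_common_edge:
  assumes e: "e \<in> shadow r H" and "u \<in> N e" "v \<in> N e"
  shows "F \<in> H \<Longrightarrow> u \<in> F \<Longrightarrow> v \<in> F \<Longrightarrow> u = v"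
proof (induction "card (F \<inter> e)" arbitrary: F)
  case 0
  then have "e \<inter> F = {}"
    using finite_edge by auto
  then show ?case
    using not_T_free_if_triangle[OF two_le_r _ card_shadow[OF e] _ card_edge] T_free assms 0
    by (auto simp: mem_nbhd_iff finite_shadow finite_edge)
next
  case (Suc k)
  then obtain x where x: "x \<in> F \<inter> e"
    by (metis card.empty ex_in_conv nat.distinct(1))
  have "card e < card (N (F - {x}))"
    using codegree_ge[OF edge_remove_in_shadow] card_shadow[OF e] r_le_d two_le_r Suc.prems x
    by fastforce
  then obtain y where y: "y \<in> N (F - {x})" "y \<notin> e"
    using card_mono[OF finite_shadow[OF e]] by (meson not_le subsetI)
  define F' where "F' = insert y (F - {x})"
  have "F' \<in> H"
    using y by (simp add: F'_def mem_nbhd_iff)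
  moreover have "u \<in> F'" "v \<in> F'"
    using nbhd_disjoint_shadow e assms(2,3) Suc.prems x by (auto simp: F'_def)
  moreover have "F' \<inter> e = (F \<inter> e) - {x}"
    using x y by (auto simp: F'_def)
  then have "k = card (F' \<inter> e)"
    using Suc.hyps(2) x finite_edge[OF Suc.prems(1)] by simp
  ultimately show ?case
    using Suc.hyps(1) by blast
qed

lemma link_nbhds_disjoint:
  assumes F: "F \<in> H" and "x \<in> F" "y \<in> F" "x \<noteq> y"
  shows "N (F - {x}) \<inter> N (F - {y}) = {}"
proof (rule ccontr)
  assume "N (F - {x}) \<inter> N (F - {y}) \<noteq> {}"
  then obtain w where w: "w \<in> N (F - {x})" "w \<in> N (F - {y})"
    by blast
  have "w \<notin> F"
    using w nbhd_disjoint_shadow[OF edge_remove_in_shadow[OF F]] assms(2-4) by blast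
  moreover have "y = w"
    using nbhd_no_common_edge[OF edge_remove_in_shadow[OF F assms(3)] in_nbhd_edge_remove[OF F assms(3)]
        w(2), of "insert w (F - {x})"] w(1) assms(3,4)
    by (simp add: mem_nbhd_iff)
  ultimately show False
    using assms(3) by blast
qed

lemma card_link_nbhds: "F \<in> H \<Longrightarrow> r * d \<le> card (\<Union>x\<in>F. N (F - {x}))"
proof -
  assume F: "F \<in> H"
  have "r * d \<le> (\<Sum>x\<in>F. card (N (F - {x})))"
    using sum_bounded_below[of F d] codegree_ge edge_remove_in_shadow[OF F] card_edge[OF F] by auto
  also have "\<dots> = card (\<Union>x\<in>F. N (F - {x}))"
    using finite_edge[OF F] finite_nbhd link_nbhds_disjoint[OF F] by (simp add: card_UN_disjoint)
  finally show ?thesis .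
qed

text \<open>Otherwise the union of the links of \<open>F\<close>, the union of the links of \<open>insert z e\<^sub>1\<close> and
  \<open>N e\<^sub>2\<close> would have no point in common, which is too many vertices: \<open>2rd + d > 2|V|\<close>.\<close>
lemma common_nbhd_no_crossing_edge:
  assumes e1: "e1 \<in> shadow r H" and e2: "e2 \<in> shadow r H" and z: "z \<in> N e1" "z \<in> N e2"
    and F: "F \<in> H" "a \<in> F" "b \<in> F" and ab: "a \<in> N e1" "b \<in> N e2"
  shows "a = b"
proof (rule ccontr)
  assume "a \<noteq> b"
  define G where "G = insert z e1"
  have G: "G \<in> H" "z \<in> G" "G - {z} = e1"
    using z nbhd_disjoint_shadow[OF e1] by (auto simp: G_def mem_nbhd_iff)
  define S\<^sub>F where "S\<^sub>F = (\<Union>f\<in>F. N (F - {f}))"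
  define S\<^sub>G where "S\<^sub>G = (\<Union>g\<in>G. N (G - {g}))"
  have "N e2 \<inter> S\<^sub>F \<inter> S\<^sub>G = {}"
  proof (rule ccontr)
    assume "N e2 \<inter> S\<^sub>F \<inter> S\<^sub>G \<noteq> {}"
    then obtain w f g where w: "w \<in> N e2" and f: "f \<in> F" "w \<in> N (F - {f})"
      and g: "g \<in> G" "w \<in> N (G - {g})"
      unfolding S\<^sub>F_def S\<^sub>G_def by blast
    have "w \<notin> F - {f}"
      using nbhd_disjoint_shadow[OF edge_remove_in_shadow[OF F(1) f(1)] f(2)] .
    moreover have "insert w (F - {f}) \<in> H" "insert w (G - {g}) \<in> H"
      using f g by (simp_all add: mem_nbhd_iff)
    moreover have "w \<notin> G - {g}"
      using nbhd_disjoint_shadow[OF edge_remove_in_shadow[OF G(1) g(1)] g(2)] .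
    ultimately have "f = b" "g = z"
      using nbhd_no_common_edge[OF e2 ab(2) w] nbhd_no_common_edge[OF e2 z(2) w] F(3) G(2) by blast+
    then have "a = w"
      using nbhd_no_common_edge[OF e1 ab(1), of w "insert w (F - {b})"] f g G(3) F(2) \<open>a \<noteq> b\<close>
      by (simp add: mem_nbhd_iff)
    then show False
      using \<open>w \<notin> F - {f}\<close> \<open>f = b\<close> F(2) \<open>a \<noteq> b\<close> by blast
  qed
  then have "card (N e2) + card S\<^sub>F + card S\<^sub>G \<le> 2 * card V"
    using card_le_twice_if_no_triple_point[OF finite_V] nbhd_subset
    unfolding S\<^sub>F_def S\<^sub>G_def by (metis (no_types, lifting) UN_subset_iff)
  moreover have "d + r * d + r * d \<le> card (N e2) + card S\<^sub>F + card S\<^sub>G"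
    using codegree_ge[OF e2] card_link_nbhds[OF F(1)] card_link_nbhds[OF G(1)]
    unfolding S\<^sub>F_def S\<^sub>G_def by linarith
  ultimately show False
    using card_V_lt by (simp add: algebra_simps)
qed

lemma common_nbhd_no_crossing_link:
  assumes G: "G \<in> H" "g \<in> G" "g' \<in> G"
    and e1: "e1 \<in> shadow r H" and e2: "e2 \<in> shadow r H" and "N e1 \<inter> N e2 \<noteq> {}"
    and "g' \<in> N e1" and "N (G - {g}) \<inter> N e2 \<noteq> {}"
  shows "g = g'"
proof (rule ccontr)
  assume "g \<noteq> g'"
  obtain z q where z: "z \<in> N e1" "z \<in> N e2" and q: "q \<in> N (G - {g})" "q \<in> N e2"
    using assms(6,8) by blast
  have "insert q (G - {g}) \<in> H"
    using q by (simp add: mem_nbhd_iff)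
  then have "g' = q"
    using common_nbhd_no_crossing_edge[OF e1 e2 z _ _ _ \<open>g' \<in> N e1\<close> q(2)] G(3) \<open>g \<noteq> g'\<close> by blast
  moreover have "q \<notin> G - {g}"
    using nbhd_disjoint_shadow[OF edge_remove_in_shadow[OF G(1,2)] q(1)] .
  ultimately show False
    using G(3) \<open>g \<noteq> g'\<close> by blast
qed

end

locale T_free_high_codegree_edge = T_free_high_codegree +
  fixes E assumes E: "E \<in> H"
begin

lemma nbhd_meets_link:
  assumes e: "e \<in> shadow r H"
  shows "\<exists>x\<in>E. N e \<inter> N (E - {x}) \<noteq> {}"
proof (rule ccontr)
  assume "\<not> ?thesis"
  then have "N e \<inter> (\<Union>x\<in>E. N (E - {x})) = {}"
    by blast
  then have "card (N e) + card (\<Union>x\<in>E. N (E - {x})) \<le> card V"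
    using finite_V finite_nbhd nbhd_subset
    by (metis (no_types, lifting) UN_subset_iff card_Un_disjoint card_mono finite_UN_I
        finite_edge[OF E] le_sup_iff)
  then have "d + r * d \<le> card V"
    using codegree_ge[OF e] card_link_nbhds[OF E] by linarith
  then show False
    using card_V_lt by (simp add: algebra_simps)
qed

definition anchor :: "'a set \<Rightarrow> 'a" where
  "anchor e = (SOME x. x \<in> E \<and> N e \<inter> N (E - {x}) \<noteq> {})"

lemma anchor_mem: "e \<in> shadow r H \<Longrightarrow> anchor e \<in> E"
  and nbhd_meets_anchor_link: "e \<in> shadow r H \<Longrightarrow> N e \<inter> N (E - {anchor e}) \<noteq> {}"
  using someI_ex[OF nbhd_meets_link[unfolded Bex_def]] by (auto simp: anchor_def)

lemma bij_betw_anchor_edge_remove: "G \<in> H \<Longrightarrow> bij_betw (\<lambda>g. anchor (G - {g})) G E"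
proof -
  assume G: "G \<in> H"
  have link: "N (G - {g}) \<inter> N (E - {anchor (G - {g})}) \<noteq> {}" "anchor (G - {g}) \<in> E"
    if "g \<in> G" for g
    using anchor_mem nbhd_meets_anchor_link edge_remove_in_shadow[OF G that] by blast+
  have inj: "inj_on (\<lambda>g. anchor (G - {g})) G"
  proof (rule inj_onI)
    fix g g' assume g: "g \<in> G" "g' \<in> G" "anchor (G - {g}) = anchor (G - {g'})"
    show "g = g'"
      using common_nbhd_no_crossing_link[OF G g(1,2) edge_remove_in_shadow[OF G g(2)]
          edge_remove_in_shadow[OF E link(2)[OF g(2)]] link(1)[OF g(2)] in_nbhd_edge_remove[OF G g(2)]]
        link(1)[OF g(1)] g(3) by simp
  qed
  moreover have "(\<lambda>g. anchor (G - {g})) ` G = E"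
    using link(2) card_image[OF inj] card_edge[OF G] card_edge[OF E] finite_edge[OF E]
    by (metis (no_types, lifting) card_subset_eq image_subsetI)
  ultimately show ?thesis
    by (simp add: bij_betw_def)
qed

lemma anchor_eq_if_common_nbhd:
  assumes e: "e \<in> shadow r H" and e': "e' \<in> shadow r H" and "x \<in> N e" "x \<in> N e'"
  shows "anchor e' = anchor e"
proof -
  define G where "G = insert x e'"
  have G: "G \<in> H" "x \<in> G" "G - {x} = e'"
    using assms(4) nbhd_disjoint_shadow[OF e' assms(4)] by (simp_all add: G_def mem_nbhd_iff)
  have "anchor e \<in> (\<lambda>g. anchor (G - {g})) ` G"
    using bij_betw_anchor_edge_remove[OF G(1)] anchor_mem[OF e] by (simp add: bij_betw_def)
  then obtain g where g: "g \<in> G" "anchor e = anchor (G - {g})"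
    by blast
  have "N (G - {g}) \<inter> N (E - {anchor e}) \<noteq> {}"
    using nbhd_meets_anchor_link[OF edge_remove_in_shadow[OF G(1) g(1)]] g(2) by simp
  then have "g = x"
    by (rule common_nbhd_no_crossing_link[OF G(1) g(1) G(2) e edge_remove_in_shadow[OF E anchor_mem[OF e]]
        nbhd_meets_anchor_link[OF e] assms(3)])
  then show ?thesis
    using g(2) G(3) by simp
qed

lemma r_partite: "r_partite r V H"
proof -
  obtain h where h: "bij_betw h E {0..<r}"
    using ex_bij_betw_finite_nat[OF finite_edge[OF E]] card_edge[OF E] by auto
  define P where "P v = (if \<exists>F\<in>H. v \<in> F then h (anchor ((SOME F. F \<in> H \<and> v \<in> F) - {v})) else 0)"
    for v
  have P_edge: "P v = h (anchor (F - {v}))" if "F \<in> H" "v \<in> F" for F v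
  proof -
    have "(SOME F. F \<in> H \<and> v \<in> F) \<in> H \<and> v \<in> (SOME F. F \<in> H \<and> v \<in> F)"
      using someI[of "\<lambda>F. F \<in> H \<and> v \<in> F"] that by blast
    then show ?thesis
      using that anchor_eq_if_common_nbhd edge_remove_in_shadow in_nbhd_edge_remove
      unfolding P_def by (metis (no_types, lifting))
  qed
  have "P v < r" for v
  proof (cases "\<exists>F\<in>H. v \<in> F")
    case True
    then obtain F where F: "F \<in> H" "v \<in> F"
      by blast
    then have "anchor (F - {v}) \<in> E"
      using anchor_mem edge_remove_in_shadow by blast
    then show ?thesis
      using P_edge[OF F] h by (auto simp: bij_betw_def)
  next
    case False
    then show ?thesis
      using two_le_r by (simp add: P_def)
  qed
  moreover have "card {v \<in> F. P v = i} = 1" if "F \<in> H" "i < r" for F i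
  proof -
    have "bij_betw (h \<circ> (\<lambda>v. anchor (F - {v}))) F {0..<r}"
      using bij_betw_trans[OF bij_betw_anchor_edge_remove[OF that(1)] h] .
    then have "card {v \<in> F. (h \<circ> (\<lambda>v. anchor (F - {v}))) v = i} = 1"
      by (rule card_fibre_bij_betw) (use that(2) in simp)
    moreover have "{v \<in> F. P v = i} = {v \<in> F. (h \<circ> (\<lambda>v. anchor (F - {v}))) v = i}"
      using P_edge[OF that(1)] by auto
    ultimately show ?thesis
      by simp
  qed
  ultimately show ?thesis
    unfolding r_partite_def by blast
qed

end

context T_free_high_codegree
begin

lemma r_partite: "r_partite r V H"
proof (cases "H = {}")
  case True
  then show ?thesis
    unfolding r_partite_def using two_le_r by (intro exI[of _ "\<lambda>_. 0"]) auto
next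
  case False
  then obtain E where "E \<in> H"
    by blast
  then interpret T_free_high_codegree_edge r V H d E
    by unfold_locales
  show ?thesis
    by (rule r_partite)
qed

end

theorem theorem1p2:
  fixes r n :: nat and V :: "'a set" and H :: "'a set set"
  assumes "r \<ge> 3"
    and "2 * real n \<ge> real (r - 1) * (2 * real r + 1)"
    and "r_graph r V H" and "card V = n"
    and "T_free r H"
    and "real (min_pos_codeg r V H) > 2 * real n / (2 * real r + 1)"
  shows "r_partite r V H"
proof -
  define d where "d = min_pos_codeg r V H"
  have "finite (shadow r H)"
    using assms(3) finite_subset[of "shadow r H" "Pow V"]
    unfolding r_graph_def shadow_def by auto
  then have codegree: "d \<le> card (nbhd V H e)" if "e \<in> shadow r H" for e
    unfolding d_def min_pos_codeg_def using that by (intro Min_le) auto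
  have n_lt: "2 * real n < real d * (2 * real r + 1)"
    using assms(6) by (simp add: d_def pos_divide_less_eq)
  then have "real (2 * card V) < real ((2 * r + 1) * d)"
    using assms(4) by (simp add: algebra_simps)
  then have card_V: "2 * card V < (2 * r + 1) * d"
    by (simp only: of_nat_less_iff)
  have "real (r - 1) < real d"
    using mult_right_less_imp_less[of "real (r - 1)" "2 * real r + 1" "real d"] assms(2) n_lt
    by linarith
  then have "r \<le> d"
    by (simp only: of_nat_less_iff)
  interpret T_free_high_codegree r V H d
    using assms(1,3,5) codegree \<open>r \<le> d\<close> card_V by unfold_locales simp_all
  show ?thesis
    by (rule r_partite)
qed

end
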